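(* Let $\mathcal C$ be a category with binary coproducts and $H\colon\mathcal C\to\mathcal C$ a cia functor. Then for every object $Y$ of $\mathcal C$ the functor $H(-)+Y$ is also a cia functor.
   Context: An algebra $a\colon GA\to A$ for an endofunctor $G$ is corecursive if for every coalgebra $e\colon X\to GX$ there is a unique $s\colon X\to A$ with $s=a\cdot Gs\cdot e$; it is a cia if for every $e\colon X\to GX+A$ there is a unique $s\colon X\to A$ with $s=[a,\mathrm{id}_A]\cdot(Gs+\mathrm{id}_A)\cdot e$. An endofunctor is a cia functor if every corecursive algebra for it is a cia. *)

theory Defs
  imports Main
begin

text \<open>Categories given by a carrier of objects and a carrier of arrows,
with domain, codomain, identities and (diagrammatically reversed)
composition: Comp C g f is g after f.\<close>

record ('o, 'm) cat =
  Obj  :: "'o set"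
  Arr  :: "'m set"
  Dom  :: "'m \<Rightarrow> 'o"
  Cod  :: "'m \<Rightarrow> 'o"
  Ident :: "'o \<Rightarrow> 'm"
  Comp :: "'m \<Rightarrow> 'm \<Rightarrow> 'm"

definition hom :: "('o, 'm) cat \<Rightarrow> 'o \<Rightarrow> 'o \<Rightarrow> 'm set" where
  "hom C X Y = {f \<in> Arr C. Dom C f = X \<and> Cod C f = Y}"

definition category :: "('o, 'm) cat \<Rightarrow> bool" where
  "category C \<longleftrightarrow>
     (\<forall>f \<in> Arr C. Dom C f \<in> Obj C \<and> Cod C f \<in> Obj C) \<and>
     (\<forall>X \<in> Obj C. Ident C X \<in> hom C X X) \<and>
     (\<forall>X \<in> Obj C. \<forall>Y \<in> Obj C. \<forall>Z \<in> Obj C. \<forall>f \<in> hom C X Y. \<forall>g \<in> hom C Y Z.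
        Comp C g f \<in> hom C X Z) \<and>
     (\<forall>f \<in> Arr C. Comp C (Ident C (Cod C f)) f = f \<and> Comp C f (Ident C (Dom C f)) = f) \<and>
     (\<forall>f \<in> Arr C. \<forall>g \<in> Arr C. \<forall>h \<in> Arr C. Cod C f = Dom C g \<longrightarrow> Cod C g = Dom C h \<longrightarrow>
        Comp C h (Comp C g f) = Comp C (Comp C h g) f)"

record ('o, 'm) endofun =
  omap :: "'o \<Rightarrow> 'o"
  fmap :: "'m \<Rightarrow> 'm"

definition endofunctor :: "('o, 'm) cat \<Rightarrow> ('o, 'm) endofun \<Rightarrow> bool" where
  "endofunctor C F \<longleftrightarrow>
     (\<forall>X \<in> Obj C. omap F X \<in> Obj C) \<and>
     (\<forall>X \<in> Obj C. \<forall>Y \<in> Obj C. \<forall>f \<in> hom C X Y. fmap F f \<in> hom C (omap F X) (omap F Y)) \<and>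
     (\<forall>X \<in> Obj C. fmap F (Ident C X) = Ident C (omap F X)) \<and>
     (\<forall>f \<in> Arr C. \<forall>g \<in> Arr C. Cod C f = Dom C g \<longrightarrow>
        fmap F (Comp C g f) = Comp C (fmap F g) (fmap F f))"

record ('o, 'm) coprods =
  csum :: "'o \<Rightarrow> 'o \<Rightarrow> 'o"
  inl  :: "'o \<Rightarrow> 'o \<Rightarrow> 'm"
  inr  :: "'o \<Rightarrow> 'o \<Rightarrow> 'm"

definition binary_coproducts :: "('o, 'm) cat \<Rightarrow> ('o, 'm) coprods \<Rightarrow> bool" where
  "binary_coproducts C P \<longleftrightarrow>
     (\<forall>A \<in> Obj C. \<forall>B \<in> Obj C.
        csum P A B \<in> Obj C \<and>
        inl P A B \<in> hom C A (csum P A B) \<and>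
        inr P A B \<in> hom C B (csum P A B) \<and>
        (\<forall>Z \<in> Obj C. \<forall>f \<in> hom C A Z. \<forall>g \<in> hom C B Z.
           (\<exists>!h. h \<in> hom C (csum P A B) Z \<and> Comp C h (inl P A B) = f \<and> Comp C h (inr P A B) = g)))"

definition copair :: "('o, 'm) cat \<Rightarrow> ('o, 'm) coprods \<Rightarrow> 'm \<Rightarrow> 'm \<Rightarrow> 'm" where
  "copair C P f g = (THE h. h \<in> hom C (csum P (Dom C f) (Dom C g)) (Cod C f) \<and>
       Comp C h (inl P (Dom C f) (Dom C g)) = f \<and> Comp C h (inr P (Dom C f) (Dom C g)) = g)"

definition summ :: "('o, 'm) cat \<Rightarrow> ('o, 'm) coprods \<Rightarrow> 'm \<Rightarrow> 'm \<Rightarrow> 'm" where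
  "summ C P f g = copair C P (Comp C (inl P (Cod C f) (Cod C g)) f)
                             (Comp C (inr P (Cod C f) (Cod C g)) g)"

definition plus_const :: "('o, 'm) cat \<Rightarrow> ('o, 'm) coprods \<Rightarrow> ('o, 'm) endofun \<Rightarrow> 'o \<Rightarrow> ('o, 'm) endofun" where
  "plus_const C P H Y = \<lparr> omap = (\<lambda>X. csum P (omap H X) Y),
                          fmap = (\<lambda>f. summ C P (fmap H f) (Ident C Y)) \<rparr>"

definition corecursive :: "('o, 'm) cat \<Rightarrow> ('o, 'm) endofun \<Rightarrow> 'o \<Rightarrow> 'm \<Rightarrow> bool" where
  "corecursive C G A a \<longleftrightarrow> A \<in> Obj C \<and> a \<in> hom C (omap G A) A \<and>
     (\<forall>X \<in> Obj C. \<forall>e \<in> hom C X (omap G X).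
        \<exists>!s. s \<in> hom C X A \<and> s = Comp C a (Comp C (fmap G s) e))"

definition cia :: "('o, 'm) cat \<Rightarrow> ('o, 'm) coprods \<Rightarrow> ('o, 'm) endofun \<Rightarrow> 'o \<Rightarrow> 'm \<Rightarrow> bool" where
  "cia C P G A a \<longleftrightarrow> A \<in> Obj C \<and> a \<in> hom C (omap G A) A \<and>
     (\<forall>X \<in> Obj C. \<forall>e \<in> hom C X (csum P (omap G X) A).
        \<exists>!s. s \<in> hom C X A \<and>
          s = Comp C (copair C P a (Ident C A)) (Comp C (summ C P (fmap G s) (Ident C A)) e))"

definition cia_functor :: "('o, 'm) cat \<Rightarrow> ('o, 'm) coprods \<Rightarrow> ('o, 'm) endofun \<Rightarrow> bool" where
  "cia_functor C P G \<longleftrightarrow> (\<forall>A a. corecursive C G A a \<longrightarrow> cia C P G A a)"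

end

theory Submission
  imports Defs
begin

text \<open>Write an algebra for \<open>H(-) + Y\<close> as \<open>a = [a\<^sub>0, y]\<close>. If \<open>a\<close> is corecursive, so is
\<open>a\<^sub>0 : HA \<rightarrow> A\<close> for \<open>H\<close> (feed \<open>inl \<cdot> e\<close> into \<open>a\<close>), hence \<open>a\<^sub>0\<close> is a cia. A flat equation
\<open>e : X \<rightarrow> (HX + Y) + A\<close> for \<open>a\<close> becomes a flat equation \<open>X \<rightarrow> HX + A\<close> for \<open>a\<^sub>0\<close> by sending
the \<open>Y\<close>-summand into \<open>A\<close> along \<open>y\<close>; both equations have the same solutions.\<close>

lemma Ex1_fixpoint_cong:
  assumes "\<exists>!s. s \<in> S \<and> s = f s" and "\<And>s. s \<in> S \<Longrightarrow> f s = g s"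
  shows "\<exists>!s. s \<in> S \<and> s = g s"
proof -
  have "s \<in> S \<and> s = f s \<longleftrightarrow> s \<in> S \<and> s = g s" for s
    using assms(2) by auto
  then show ?thesis using assms(1) by simp
qed

locale coprod_category =
  fixes C :: "('o, 'm) cat" and P :: "('o, 'm) coprods"
  assumes category: "category C" and coproducts: "binary_coproducts C P"
begin

lemma hom_Obj: "f \<in> hom C X Y \<Longrightarrow> X \<in> Obj C \<and> Y \<in> Obj C"
  using category unfolding category_def hom_def by auto

lemma Comp_hom: "f \<in> hom C X Y \<Longrightarrow> g \<in> hom C Y Z \<Longrightarrow> Comp C g f \<in> hom C X Z"
  using category hom_Obj[of f X Y] hom_Obj[of g Y Z] unfolding category_def by blast

lemma Ident_hom: "X \<in> Obj C \<Longrightarrow> Ident C X \<in> hom C X X"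
  using category unfolding category_def by blast

lemma Comp_Ident_left: "f \<in> hom C X Y \<Longrightarrow> Comp C (Ident C Y) f = f"
  using category unfolding category_def hom_def by auto

lemma Comp_Ident_right: "f \<in> hom C X Y \<Longrightarrow> Comp C f (Ident C X) = f"
  using category unfolding category_def hom_def by auto

lemma Comp_assoc: "f \<in> hom C X Y \<Longrightarrow> g \<in> hom C Y Z \<Longrightarrow> h \<in> hom C Z W \<Longrightarrow>
    Comp C h (Comp C g f) = Comp C (Comp C h g) f"
  using category unfolding category_def hom_def by auto

lemma inl_hom: "A \<in> Obj C \<Longrightarrow> B \<in> Obj C \<Longrightarrow> inl P A B \<in> hom C A (csum P A B)"
  using coproducts unfolding binary_coproducts_def by blast

lemma inr_hom: "A \<in> Obj C \<Longrightarrow> B \<in> Obj C \<Longrightarrow> inr P A B \<in> hom C B (csum P A B)"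
  using coproducts unfolding binary_coproducts_def by blast

lemma copair_universal:
  assumes f: "f \<in> hom C A Z" and g: "g \<in> hom C B Z"
  shows "copair C P f g \<in> hom C (csum P A B) Z \<and> Comp C (copair C P f g) (inl P A B) = f
     \<and> Comp C (copair C P f g) (inr P A B) = g"
proof -
  have "A \<in> Obj C" "B \<in> Obj C" "Z \<in> Obj C" using hom_Obj f g by auto
  then have "\<exists>!h. h \<in> hom C (csum P A B) Z \<and> Comp C h (inl P A B) = f \<and> Comp C h (inr P A B) = g"
    using coproducts f g unfolding binary_coproducts_def by blast
  from theI'[OF this] show ?thesis
    using f g unfolding copair_def hom_def by simp
qed

lemma copair_hom: "f \<in> hom C A Z \<Longrightarrow> g \<in> hom C B Z \<Longrightarrow> copair C P f g \<in> hom C (csum P A B) Z"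
  and Comp_copair_inl: "f \<in> hom C A Z \<Longrightarrow> g \<in> hom C B Z \<Longrightarrow> Comp C (copair C P f g) (inl P A B) = f"
  and Comp_copair_inr: "f \<in> hom C A Z \<Longrightarrow> g \<in> hom C B Z \<Longrightarrow> Comp C (copair C P f g) (inr P A B) = g"
  using copair_universal by blast+

lemma copair_eta:
  assumes A: "A \<in> Obj C" and B: "B \<in> Obj C" and h: "h \<in> hom C (csum P A B) Z"
  shows "h = copair C P (Comp C h (inl P A B)) (Comp C h (inr P A B))"
proof -
  have f: "Comp C h (inl P A B) \<in> hom C A Z" using Comp_hom inl_hom assms by blast
  have g: "Comp C h (inr P A B) \<in> hom C B Z" using Comp_hom inr_hom assms by blast
  have "Z \<in> Obj C" using hom_Obj h by auto
  then have "\<exists>!k. k \<in> hom C (csum P A B) Z \<and> Comp C k (inl P A B) = Comp C h (inl P A B)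
      \<and> Comp C k (inr P A B) = Comp C h (inr P A B)"
    using coproducts A B f g unfolding binary_coproducts_def by blast
  then show ?thesis using copair_universal[OF f g] h by blast
qed

lemma Comp_copair:
  assumes f: "f \<in> hom C A Z" and g: "g \<in> hom C B Z" and k: "k \<in> hom C Z W"
  shows "Comp C k (copair C P f g) = copair C P (Comp C k f) (Comp C k g)"
proof -
  have A: "A \<in> Obj C" and B: "B \<in> Obj C" using hom_Obj f g by auto
  have "Comp C (Comp C k (copair C P f g)) (inl P A B) = Comp C k f"
    using Comp_assoc[OF inl_hom[OF A B] copair_hom[OF f g] k] Comp_copair_inl[OF f g] by simp
  moreover have "Comp C (Comp C k (copair C P f g)) (inr P A B) = Comp C k g"
    using Comp_assoc[OF inr_hom[OF A B] copair_hom[OF f g] k] Comp_copair_inr[OF f g] by simp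
  ultimately show ?thesis
    using copair_eta[OF A B Comp_hom[OF copair_hom[OF f g] k]] by simp
qed

lemma summ_eq_copair:
  "u \<in> hom C A A' \<Longrightarrow> v \<in> hom C B B' \<Longrightarrow>
    summ C P u v = copair C P (Comp C (inl P A' B') u) (Comp C (inr P A' B') v)"
  unfolding summ_def hom_def by auto

lemma summ_universal:
  assumes u: "u \<in> hom C A A'" and v: "v \<in> hom C B B'"
  shows "summ C P u v \<in> hom C (csum P A B) (csum P A' B') \<and>
    Comp C (summ C P u v) (inl P A B) = Comp C (inl P A' B') u \<and>
    Comp C (summ C P u v) (inr P A B) = Comp C (inr P A' B') v"
proof -
  have "A' \<in> Obj C" "B' \<in> Obj C" using hom_Obj u v by auto
  then show ?thesis
    using copair_universal[OF Comp_hom[OF u inl_hom] Comp_hom[OF v inr_hom]] summ_eq_copair[OF u v]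
    by simp
qed

lemma summ_hom: "u \<in> hom C A A' \<Longrightarrow> v \<in> hom C B B' \<Longrightarrow>
    summ C P u v \<in> hom C (csum P A B) (csum P A' B')"
  and Comp_summ_inl: "u \<in> hom C A A' \<Longrightarrow> v \<in> hom C B B' \<Longrightarrow>
    Comp C (summ C P u v) (inl P A B) = Comp C (inl P A' B') u"
  using summ_universal by blast+

lemma copair_Comp_summ:
  assumes f: "f \<in> hom C A' Z" and g: "g \<in> hom C B' Z"
    and u: "u \<in> hom C A A'" and v: "v \<in> hom C B B'"
  shows "Comp C (copair C P f g) (summ C P u v) = copair C P (Comp C f u) (Comp C g v)"
proof -
  have A': "A' \<in> Obj C" and B': "B' \<in> Obj C" using hom_Obj u v by auto
  note l = inl_hom[OF A' B'] and r = inr_hom[OF A' B'] and fg = copair_hom[OF f g]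
  have "Comp C (copair C P f g) (summ C P u v) =
      copair C P (Comp C (copair C P f g) (Comp C (inl P A' B') u))
                 (Comp C (copair C P f g) (Comp C (inr P A' B') v))"
    using summ_eq_copair[OF u v] Comp_copair[OF Comp_hom[OF u l] Comp_hom[OF v r] fg] by simp
  also have "\<dots> = copair C P (Comp C f u) (Comp C g v)"
    using Comp_assoc[OF u l fg] Comp_assoc[OF v r fg] Comp_copair_inl[OF f g] Comp_copair_inr[OF f g]
    by simp
  finally show ?thesis .
qed

lemma copair_Ident_Comp_summ_Ident:
  assumes f: "f \<in> hom C A' Z" and u: "u \<in> hom C A A'"
  shows "Comp C (copair C P f (Ident C Z)) (summ C P u (Ident C Z)) = copair C P (Comp C f u) (Ident C Z)"
proof -
  have Z: "Ident C Z \<in> hom C Z Z" using Ident_hom hom_Obj f by blast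
  show ?thesis using copair_Comp_summ[OF f Z u Z] Comp_Ident_left[OF Z] by simp
qed

definition merge :: "'o \<Rightarrow> 'o \<Rightarrow> 'm \<Rightarrow> 'm" where
  "merge B A y = copair C P (copair C P (inl P B A) (Comp C (inr P B A) y)) (inr P B A)"

lemma merge_hom:
  assumes B: "B \<in> Obj C" and y: "y \<in> hom C Y A"
  shows "merge B A y \<in> hom C (csum P (csum P B Y) A) (csum P B A)"
proof -
  have A: "A \<in> Obj C" using hom_Obj y by blast
  show ?thesis unfolding merge_def
    by (intro copair_hom Comp_hom[OF y] inl_hom inr_hom A B)
qed

lemma copair_Ident_Comp_merge:
  assumes f: "f \<in> hom C B A" and y: "y \<in> hom C Y A"
  shows "Comp C (copair C P f (Ident C A)) (merge B A y) = copair C P (copair C P f y) (Ident C A)"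
proof -
  have B: "B \<in> Obj C" and A: "A \<in> Obj C" using hom_Obj f by auto
  note l = inl_hom[OF B A] and r = inr_hom[OF B A] and idA = Ident_hom[OF A]
  note fid = copair_hom[OF f idA]
  have "Comp C (copair C P f (Ident C A)) (copair C P (inl P B A) (Comp C (inr P B A) y))
      = copair C P f y"
    using Comp_copair[OF l Comp_hom[OF y r] fid] Comp_assoc[OF y r fid]
      Comp_copair_inl[OF f idA] Comp_copair_inr[OF f idA] Comp_Ident_left[OF y] by simp
  then show ?thesis
    unfolding merge_def
    using Comp_copair[OF copair_hom[OF l Comp_hom[OF y r]] r fid] Comp_copair_inr[OF f idA] by simp
qed

end

locale plus_const_functor = coprod_category C P for C :: "('o, 'm) cat" and P +
  fixes H :: "('o, 'm) endofun" and Y :: 'o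
  assumes endofunctor: "endofunctor C H" and Y_Obj: "Y \<in> Obj C"
begin

abbreviation G :: "('o, 'm) endofun" where
  "G \<equiv> plus_const C P H Y"

lemma omap_G [simp]: "omap G X = csum P (omap H X) Y"
  and fmap_G [simp]: "fmap G f = summ C P (fmap H f) (Ident C Y)"
  by (simp_all add: plus_const_def)

lemma omap_H_Obj: "X \<in> Obj C \<Longrightarrow> omap H X \<in> Obj C"
  using endofunctor unfolding endofunctor_def by blast

lemma fmap_H_hom: "s \<in> hom C X A \<Longrightarrow> fmap H s \<in> hom C (omap H X) (omap H A)"
  using endofunctor hom_Obj unfolding endofunctor_def by blast

lemma corecursive_Comp_inl:
  assumes cr: "corecursive C G A a"
  shows "corecursive C H A (Comp C a (inl P (omap H A) Y))"
proof -
  have A: "A \<in> Obj C" and a: "a \<in> hom C (csum P (omap H A) Y) A"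
    using cr unfolding corecursive_def by auto
  let ?a\<^sub>0 = "Comp C a (inl P (omap H A) Y)"
  note lA = inl_hom[OF omap_H_Obj[OF A] Y_Obj]
  show ?thesis unfolding corecursive_def
  proof (intro conjI A Comp_hom[OF lA a] ballI)
    fix X e assume X: "X \<in> Obj C" and e: "e \<in> hom C X (omap H X)"
    note lX = inl_hom[OF omap_H_Obj[OF X] Y_Obj]
    have unique: "\<exists>!s. s \<in> hom C X A \<and>
        s = Comp C a (Comp C (fmap G s) (Comp C (inl P (omap H X) Y) e))"
      using cr X Comp_hom[OF e lX] unfolding corecursive_def omap_G by blast
    have fixpoint_eq: "Comp C a (Comp C (fmap G s) (Comp C (inl P (omap H X) Y) e))
        = Comp C ?a\<^sub>0 (Comp C (fmap H s) e)" if s: "s \<in> hom C X A" for s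
    proof -
      note Hs = fmap_H_hom[OF s] and idY = Ident_hom[OF Y_Obj]
      have "Comp C (fmap G s) (Comp C (inl P (omap H X) Y) e)
          = Comp C (inl P (omap H A) Y) (Comp C (fmap H s) e)"
        using Comp_assoc[OF e lX summ_hom[OF Hs idY]] Comp_summ_inl[OF Hs idY] Comp_assoc[OF e Hs lA]
        by simp
      then show ?thesis using Comp_assoc[OF Comp_hom[OF e Hs] lA a] by simp
    qed
    show "\<exists>!s. s \<in> hom C X A \<and> s = Comp C ?a\<^sub>0 (Comp C (fmap H s) e)"
      by (rule Ex1_fixpoint_cong[OF unique fixpoint_eq])
  qed
qed

lemma cia_equation_merge:
  assumes a: "a \<in> hom C (csum P (omap H A) Y) A" and s: "s \<in> hom C X A"
  defines "a\<^sub>0 \<equiv> Comp C a (inl P (omap H A) Y)" and "y \<equiv> Comp C a (inr P (omap H A) Y)"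
  shows "Comp C (copair C P a (Ident C A)) (summ C P (fmap G s) (Ident C A))
    = Comp C (Comp C (copair C P a\<^sub>0 (Ident C A)) (summ C P (fmap H s) (Ident C A))) (merge (omap H X) A y)"
proof -
  have X: "X \<in> Obj C" and A: "A \<in> Obj C" using hom_Obj s by auto
  note HA = omap_H_Obj[OF A] and Hs = fmap_H_hom[OF s] and idY = Ident_hom[OF Y_Obj]
  have a\<^sub>0: "a\<^sub>0 \<in> hom C (omap H A) A" and y: "y \<in> hom C Y A"
    unfolding a\<^sub>0_def y_def using Comp_hom[OF inl_hom[OF HA Y_Obj] a] Comp_hom[OF inr_hom[OF HA Y_Obj] a]
    by auto
  have "Comp C a (summ C P (fmap H s) (Ident C Y)) = copair C P (Comp C a\<^sub>0 (fmap H s)) y"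
    using copair_Comp_summ[OF a\<^sub>0 y Hs idY] copair_eta[OF HA Y_Obj a] Comp_Ident_right[OF y]
    unfolding a\<^sub>0_def y_def by simp
  then have "Comp C (copair C P a (Ident C A)) (summ C P (fmap G s) (Ident C A))
      = copair C P (copair C P (Comp C a\<^sub>0 (fmap H s)) y) (Ident C A)"
    using copair_Ident_Comp_summ_Ident[OF a summ_hom[OF Hs idY]] by simp
  also have "\<dots> = Comp C (copair C P (Comp C a\<^sub>0 (fmap H s)) (Ident C A)) (merge (omap H X) A y)"
    using copair_Ident_Comp_merge[OF Comp_hom[OF Hs a\<^sub>0] y] ..
  finally show ?thesis using copair_Ident_Comp_summ_Ident[OF a\<^sub>0 Hs] by simp
qed

lemma cia_of_cia_Comp_inl:
  assumes a: "a \<in> hom C (csum P (omap H A) Y) A"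
    and cia\<^sub>0: "cia C P H A (Comp C a (inl P (omap H A) Y))"
  shows "cia C P G A a"
proof -
  let ?a\<^sub>0 = "Comp C a (inl P (omap H A) Y)" and ?y = "Comp C a (inr P (omap H A) Y)"
  have A: "A \<in> Obj C" using hom_Obj a by blast
  have y: "?y \<in> hom C Y A" using Comp_hom[OF inr_hom[OF omap_H_Obj[OF A] Y_Obj] a] .
  have a\<^sub>0: "?a\<^sub>0 \<in> hom C (omap H A) A" using Comp_hom[OF inl_hom[OF omap_H_Obj[OF A] Y_Obj] a] .
  show ?thesis unfolding cia_def omap_G
  proof (intro conjI A a ballI)
    fix X e assume X: "X \<in> Obj C" and e: "e \<in> hom C X (csum P (csum P (omap H X) Y) A)"
    note m = merge_hom[OF omap_H_Obj[OF X] y] and idA = Ident_hom[OF A]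
    have unique: "\<exists>!s. s \<in> hom C X A \<and> s = Comp C (copair C P ?a\<^sub>0 (Ident C A))
        (Comp C (summ C P (fmap H s) (Ident C A)) (Comp C (merge (omap H X) A ?y) e))"
      using cia\<^sub>0 X Comp_hom[OF e m] unfolding cia_def by blast
    have fixpoint_eq: "Comp C (copair C P ?a\<^sub>0 (Ident C A))
          (Comp C (summ C P (fmap H s) (Ident C A)) (Comp C (merge (omap H X) A ?y) e))
        = Comp C (copair C P a (Ident C A)) (Comp C (summ C P (fmap G s) (Ident C A)) e)"
      if s: "s \<in> hom C X A" for s
    proof -
      note sH = summ_hom[OF fmap_H_hom[OF s] idA] and c\<^sub>0 = copair_hom[OF a\<^sub>0 idA]
      note sG = summ_hom[OF summ_hom[OF fmap_H_hom[OF s] Ident_hom[OF Y_Obj]] idA]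
      show ?thesis
        using cia_equation_merge[OF a s] Comp_assoc[OF Comp_hom[OF e m] sH c\<^sub>0]
          Comp_assoc[OF e m Comp_hom[OF sH c\<^sub>0]] Comp_assoc[OF e sG copair_hom[OF a idA]]
        by simp
    qed
    show "\<exists>!s. s \<in> hom C X A \<and>
        s = Comp C (copair C P a (Ident C A)) (Comp C (summ C P (fmap G s) (Ident C A)) e)"
      by (rule Ex1_fixpoint_cong[OF unique fixpoint_eq])
  qed
qed

end

theorem mainTheorem5:
  fixes C :: "('o, 'm) cat" and P :: "('o, 'm) coprods" and H :: "('o, 'm) endofun"
  assumes "category C"
    and "binary_coproducts C P"
    and "endofunctor C H"
    and "cia_functor C P H"
    and "Y \<in> Obj C"
  shows "cia_functor C P (plus_const C P H Y)"
proof -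
  interpret plus_const_functor C P H Y
    using assms by unfold_locales
  show ?thesis unfolding cia_functor_def
  proof (intro allI impI)
    fix A a assume cr: "corecursive C G A a"
    then have "cia C P H A (Comp C a (inl P (omap H A) Y))"
      using corecursive_Comp_inl assms(4) unfolding cia_functor_def by blast
    moreover have "a \<in> hom C (csum P (omap H A) Y) A" using cr unfolding corecursive_def by simp
    ultimately show "cia C P G A a" by (rule cia_of_cia_Comp_inl[rotated])
  qed
qed

end
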